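(* For all integers $k\ge1$ and all $n\ge\max(4,k)$, $$\max_{\mathbf x}\Big\{\log\frac{\sup_{(\pi,P)\in\Theta^k}\mathbb P_{\pi,P}(\mathbf x)}{\mathrm{KT}_k(\mathbf x)}\Big\}\le\Big(\frac{k(k+2)}{2}-\frac12\Big)\log n+c_{k,n},$$ where the maximum is over all adjacency matrices $\mathbf x$ on $n$ nodes and $$c_{k,n}=\frac{k(k+1)}{2}\log\Gamma\big(\tfrac12\big)+\frac{k(k-1)}{4n}+\frac{1}{12n}+\log\frac{\Gamma(\frac12)}{\Gamma(\frac k2)}+\frac{7k(k+1)}{12}.$$
   Context: An adjacency matrix on $n$ nodes is a symmetric $\mathbf{x}\in\{0,1\}^{n\times n}$ with zero diagonal. For $k\ge1$ let $\Theta^k=\{(\pi,P):\pi\in(0,1]^k,\ \sum_{a=1}^k\pi_a=1,\ P\in[0,1]^{k\times k}\text{ symmetric}\}$ and $[k]=\{1,\dots,k\}$. For $(\pi,P)\in\Theta^k$ and $\mathbf z_n\in[k]^n$, $\mathbb P_{\pi,P}(\mathbf z_n,\mathbf x)=\prod_{a=1}^k\pi_a^{n_a}\prod_{a,b=1}^kP_{a,b}^{O_{a,b}/2}(1-P_{a,b})^{(n_{a,b}-O_{a,b})/2}$ (with $0^0=1$), where $n_a=\sum_i 1\{z_i=a\}$, $n_{a,b}=n_an_b$ for $a\ne b$, $n_{a,a}=n_a(n_a-1)$, $O_{a,b}=\sum_{i,j=1}^n1\{z_i=a,z_j=b\}x_{ij}$; and $\mathbb P_{\pi,P}(\mathbf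 x)=\sum_{\mathbf z_n\in[k]^n}\mathbb P_{\pi,P}(\mathbf z_n,\mathbf x)$. The KT prior on $\Theta^k$ is $\nu_k(\pi,P)=\Big[\frac{\Gamma(k/2)}{\Gamma(1/2)^k}\prod_{a=1}^k\pi_a^{-1/2}\Big]\Big[\prod_{1\le a\le b\le k}\frac{1}{\Gamma(1/2)^2}P_{a,b}^{-1/2}(1-P_{a,b})^{-1/2}\Big]$, and $\mathrm{KT}_k(\mathbf x)=\int_{\Theta^k}\mathbb P_{\pi,P}(\mathbf x)\nu_k(\pi,P)\,d\pi\,dP$. *)

theory Defs
  imports "HOL-Analysis.Analysis"
begin

text \<open>Nodes are 0..<n, communities (labels) are 0..<k (i.e. [k] shifted by one).\<close>

definition rpow0 :: "real \<Rightarrow> real \<Rightarrow> real" where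
  "rpow0 y e = (if y = 0 then (if e = 0 then 1 else 0) else y powr e)"

definition adjacency :: "nat \<Rightarrow> (nat \<Rightarrow> nat \<Rightarrow> bool) \<Rightarrow> bool" where
  "adjacency n x \<longleftrightarrow> (\<forall>i<n. \<forall>j<n. x i j = x j i) \<and> (\<forall>i<n. \<not> x i i)"

definition Theta :: "nat \<Rightarrow> ((nat \<Rightarrow> real) \<times> (nat \<Rightarrow> nat \<Rightarrow> real)) set" where
  "Theta k = {(\<pi>, P). (\<forall>a<k. 0 < \<pi> a \<and> \<pi> a \<le> 1) \<and> (\<Sum>a<k. \<pi> a) = 1 \<and>
      (\<forall>a<k. \<forall>b<k. 0 \<le> P a b \<and> P a b \<le> 1 \<and> P a b = P b a)}"

definition cnt :: "nat \<Rightarrow> (nat \<Rightarrow> nat) \<Rightarrow> nat \<Rightarrow> nat" where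
  "cnt n z a = card {i. i < n \<and> z i = a}"

definition npairs :: "nat \<Rightarrow> (nat \<Rightarrow> nat) \<Rightarrow> nat \<Rightarrow> nat \<Rightarrow> nat" where
  "npairs n z a b = (if a \<noteq> b then cnt n z a * cnt n z b else cnt n z a * (cnt n z a - 1))"

definition Ocnt :: "nat \<Rightarrow> (nat \<Rightarrow> nat) \<Rightarrow> (nat \<Rightarrow> nat \<Rightarrow> bool) \<Rightarrow> nat \<Rightarrow> nat \<Rightarrow> nat" where
  "Ocnt n z x a b = (\<Sum>i<n. \<Sum>j<n. of_bool (z i = a \<and> z j = b \<and> x i j))"

definition prob_zx :: "nat \<Rightarrow> nat \<Rightarrow> (nat \<Rightarrow> real) \<Rightarrow> (nat \<Rightarrow> nat \<Rightarrow> real) \<Rightarrow>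
    (nat \<Rightarrow> nat) \<Rightarrow> (nat \<Rightarrow> nat \<Rightarrow> bool) \<Rightarrow> real" where
  "prob_zx k n \<pi> P z x =
     (\<Prod>a<k. \<pi> a ^ cnt n z a) *
     (\<Prod>a<k. \<Prod>b<k. rpow0 (P a b) (real (Ocnt n z x a b) / 2) *
        rpow0 (1 - P a b) ((real (npairs n z a b) - real (Ocnt n z x a b)) / 2))"

definition prob_x :: "nat \<Rightarrow> nat \<Rightarrow> (nat \<Rightarrow> real) \<Rightarrow> (nat \<Rightarrow> nat \<Rightarrow> real) \<Rightarrow>
    (nat \<Rightarrow> nat \<Rightarrow> bool) \<Rightarrow> real" where
  "prob_x k n \<pi> P x = (\<Sum>z\<in>({..<n} \<rightarrow>\<^sub>E {..<k}). prob_zx k n \<pi> P z x)"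

definition KT_prior :: "nat \<Rightarrow> (nat \<Rightarrow> real) \<Rightarrow> (nat \<Rightarrow> nat \<Rightarrow> real) \<Rightarrow> real" where
  "KT_prior k \<pi> P =
     (Gamma (real k / 2) / Gamma (1/2) ^ k * (\<Prod>a<k. \<pi> a powr (-1/2))) *
     (\<Prod>(a,b)\<in>{(a,b). a \<le> b \<and> b < k}.
        1 / Gamma (1/2) ^ 2 * P a b powr (-1/2) * (1 - P a b) powr (-1/2))"

text \<open>Integration over Theta^k: pi is parametrised by its first k-1 coordinates
  (Lebesgue measure on them, pi_(k-1) = 1 - sum of the others), and the symmetric P by
  its entries P(a,b), a \<le> b (Lebesgue measure on each).\<close>
definition pi_of :: "nat \<Rightarrow> (nat \<Rightarrow> real) \<Rightarrow> nat \<Rightarrow> real" where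
  "pi_of k u a = (if a + 1 < k then u a else 1 - (\<Sum>c<k - 1. u c))"

definition P_of :: "((nat \<times> nat) \<Rightarrow> real) \<Rightarrow> nat \<Rightarrow> nat \<Rightarrow> real" where
  "P_of q a b = q (min a b, max a b)"

definition KT :: "nat \<Rightarrow> nat \<Rightarrow> (nat \<Rightarrow> nat \<Rightarrow> bool) \<Rightarrow> real" where
  "KT k n x = enn2real (\<integral>\<^sup>+ w.
      ennreal (indicator (Theta k) (pi_of k (fst w), P_of (snd w)) *
               prob_x k n (pi_of k (fst w)) (P_of (snd w)) x *
               KT_prior k (pi_of k (fst w)) (P_of (snd w)))
      \<partial>(PiM {..<k - 1} (\<lambda>_. lborel) \<Otimes>\<^sub>M PiM {(a,b). a \<le> b \<and> b < k} (\<lambda>_. lborel)))"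

definition MaxLik :: "nat \<Rightarrow> nat \<Rightarrow> (nat \<Rightarrow> nat \<Rightarrow> bool) \<Rightarrow> real" where
  "MaxLik k n x = Sup {prob_x k n \<pi> P x | \<pi> P. (\<pi>, P) \<in> Theta k}"

definition c_const :: "nat \<Rightarrow> nat \<Rightarrow> real" where
  "c_const k n = real (k * (k + 1)) / 2 * ln (Gamma (1/2)) + real (k * (k - 1)) / (4 * real n)
     + 1 / (12 * real n) + ln (Gamma (1/2) / Gamma (real k / 2)) + 7 * real (k * (k + 1)) / 12"

end

theory Submission
  imports Defs
begin

(* Fix a labelling z. The joint likelihood P(z, x) factorises into the multinomial term
   prod_a pi_a^(n_a) and, for every unordered pair of blocks a <= b, a binomial term
   P_ab^(e_ab) (1 - P_ab)^(f_ab) in the numbers of edges and non-edges between the blocks.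
   Against the KT prior each term integrates to a Dirichlet resp. Beta integral, so KT_k(x)
   is the sum over z of products of KT probabilities of counts. Conversely, by Gibbs'
   inequality each term is at most its maximum-likelihood value, and Stirling-type bounds on
   Gamma show that this exceeds the KT probability by at most
   e^(1 + (k-1)(k-2)/(4n)) n^((k-1)/2) / Gamma(k/2) for the multinomial term and by e n for
   each of the k(k+1)/2 binomial terms (where e_ab + f_ab <= n^2). Summing over z and taking
   logarithms gives the bound. *)

section \<open>Bounds on the Gamma function\<close>

lemma Gamma_plus1_pos:
  fixes x :: real
  assumes "x > 0"
  shows "Gamma (x + 1) = x * Gamma x"
  using assms by (intro Gamma_plus1) auto

lemma ln_one_plus_le:
  fixes x :: real
  assumes "x \<ge> 0"
  shows "ln (1 + x) \<le> x * (1 + ln ((2 + x) / (2 + 2 * x)))"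
proof -
  define F where "F t = t + t * ln (2 + t) - t * ln (2 + 2 * t) - ln (1 + t)" for t :: real
  have F': "(F has_real_derivative ln ((2 + t) / (2 + 2 * t)) + t / (2 + t)) (at t)"
    if "t \<in> {0..x}" for t
  proof -
    have t: "t \<ge> 0" using that by auto
    have F'_raw: "(F has_real_derivative 1 + (ln (2 + t) + t * (1 / (2 + t)))
        - (ln (2 + 2 * t) + t * (2 / (2 + 2 * t))) - 1 / (1 + t)) (at t)"
      unfolding F_def using t by (auto intro!: derivative_eq_intros)
    have eq: "1 + (ln (2 + t) + t * (1 / (2 + t))) - (ln (2 + 2 * t) + t * (2 / (2 + 2 * t)))
        - 1 / (1 + t) = ln ((2 + t) / (2 + 2 * t)) + t / (2 + t)"
    proof -
      have "t * (2 / (2 + 2 * t)) = t / (1 + t)" using t by (simp add: field_simps)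
      then have "t * (2 / (2 + 2 * t)) + 1 / (1 + t) = 1"
        using t by (simp add: add_divide_distrib[symmetric])
      moreover have "ln ((2 + t) / (2 + 2 * t)) = ln (2 + t) - ln (2 + 2 * t)"
        using t by (simp add: ln_div)
      ultimately show ?thesis by simp
    qed
    show ?thesis using F'_raw unfolding eq .
  qed
  have "0 \<le> ln ((2 + t) / (2 + 2 * t)) + t / (2 + t)" if "t \<in> {0..x}" for t
  proof -
    have t: "t \<ge> 0" using that by auto
    have "ln ((2 + 2 * t) / (2 + t)) \<le> (2 + 2 * t) / (2 + t) - 1"
      using t by (intro ln_le_minus_one) auto
    moreover have "(2 + 2 * t) / (2 + t) - 1 = t / (2 + t)" using t by (simp add: field_simps)
    moreover have "ln ((2 + t) / (2 + 2 * t)) = - ln ((2 + 2 * t) / (2 + t))"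
      using t by (simp add: ln_div)
    ultimately show ?thesis by linarith
  qed
  then have "F 0 \<le> F x" using assms by (intro deriv_nonneg_imp_mono[OF F']) auto
  then show ?thesis using assms by (simp add: F_def ln_div algebra_simps)
qed

lemma ln_one_plus_ge:
  fixes x :: real
  assumes "x \<ge> 0"
  shows "2 * x / (2 + x) \<le> ln (1 + x)"
proof -
  define H where "H t = ln (1 + t) - 2 * t / (2 + t)" for t :: real
  have H': "(H has_real_derivative 1 / (1 + t) - 4 / (2 + t)\<^sup>2) (at t)" if "t \<in> {0..x}" for t
  proof -
    have "(H has_real_derivative 1 / (1 + t) - (2 * (2 + t) - 2 * t) / (2 + t)\<^sup>2) (at t)"
      unfolding H_def using that by (auto intro!: derivative_eq_intros simp: power2_eq_square)
    then show ?thesis by simp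
  qed
  have "0 \<le> 1 / (1 + t) - 4 / (2 + t)\<^sup>2" if "t \<in> {0..x}" for t
  proof -
    have t: "t \<ge> 0" using that by auto
    have "4 * (1 + t) \<le> (2 + t)\<^sup>2" by (simp add: power2_eq_square algebra_simps)
    then show ?thesis using t by (simp add: field_simps)
  qed
  then have "H 0 \<le> H x" using assms by (intro deriv_nonneg_imp_mono[OF H']) auto
  then show ?thesis by (simp add: H_def)
qed

lemma Suc_power_Suc_le:
  "(real m + 1) ^ (m + 1) \<le> exp 1 * (real m + 1/2) * real m ^ m"
proof (cases "m = 0")
  case True
  then show ?thesis using exp_ge_add_one_self[of 1] by simp
next
  case False
  then have m: "real m \<ge> 1" by simp
  have frac: "(2 + 1 / real m) / (2 + 2 * (1 / real m)) = (2 * real m + 1) / (2 * real m + 2)"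
  proof -
    have "2 + 1 / real m = (2 * real m + 1) / real m"
      "2 + 2 * (1 / real m) = (2 * real m + 2) / real m"
      using m by (simp_all add: field_simps)
    then show ?thesis using m by simp
  qed
  have "real m * ln (1 + 1 / real m)
      \<le> real m * (1 / real m * (1 + ln ((2 * real m + 1) / (2 * real m + 2))))"
    using ln_one_plus_le[of "1 / real m"] unfolding frac by (intro mult_left_mono) auto
  also have "\<dots> = 1 + ln ((2 * real m + 1) / (2 * real m + 2))" using m by simp
  finally have "exp (real m * ln (1 + 1 / real m))
      \<le> exp (1 + ln ((2 * real m + 1) / (2 * real m + 2)))"
    by simp
  also have "exp (real m * ln (1 + 1 / real m)) = (1 + 1 / real m) ^ m"
    using m by (simp add: ln_realpow[symmetric] add_pos_pos)
  also have "(1 + 1 / real m) ^ m = (real m + 1) ^ m / real m ^ m"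
    using m by (simp add: field_simps power_divide)
  also have "exp (1 + ln ((2 * real m + 1) / (2 * real m + 2)))
      = exp 1 * ((2 * real m + 1) / (2 * real m + 2))"
    using m by (simp add: exp_add)
  finally show ?thesis using m by (simp add: field_simps)
qed

lemma Gamma_nat_plus_half_ge: "sqrt pi * (real m / exp 1) ^ m \<le> Gamma (real m + 1/2)"
proof (induction m)
  case 0
  then show ?case by (simp add: Gamma_one_half_real)
next
  case (Suc m)
  have "sqrt pi * (real (Suc m) / exp 1) ^ Suc m = sqrt pi * (real m + 1) ^ (m + 1) / exp 1 ^ (m + 1)"
    by (simp add: power_divide add.commute)
  also have "\<dots> \<le> sqrt pi * (exp 1 * (real m + 1/2) * real m ^ m) / exp 1 ^ (m + 1)"
    by (intro divide_right_mono mult_left_mono Suc_power_Suc_le) auto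
  also have "\<dots> = (real m + 1/2) * (sqrt pi * (real m / exp 1) ^ m)"
    by (simp add: power_divide field_simps)
  also have "\<dots> \<le> (real m + 1/2) * Gamma (real m + 1/2)"
    using Suc.IH by (intro mult_left_mono) auto
  also have "\<dots> = Gamma (real (Suc m) + 1/2)"
    using Gamma_plus1_pos[of "real m + 1/2"] by (simp add: add_ac)
  finally show ?case .
qed

lemma exp_one_le_one_plus_inverse_powr:
  assumes "m \<ge> 1"
  shows "exp 1 \<le> (1 + 1 / real m) powr (real m + 1/2)"
proof -
  have m: "real m \<ge> 1" using assms by simp
  have "1 = (real m + 1/2) * (2 * (1 / real m) / (2 + 1 / real m))"
    using m by (simp add: field_simps)
  also have "\<dots> \<le> (real m + 1/2) * ln (1 + 1 / real m)"
    using m by (intro mult_left_mono ln_one_plus_ge) auto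
  finally have "exp 1 \<le> exp ((real m + 1/2) * ln (1 + 1 / real m))" by simp
  also have "\<dots> = (1 + 1 / real m) powr (real m + 1/2)"
    using m by (simp add: powr_def add_pos_pos less_imp_neq[symmetric])
  finally show ?thesis .
qed

lemma fact_le_Stirling:
  assumes "m \<ge> 1"
  shows "fact m \<le> exp 1 * sqrt (real m) * (real m / exp 1) ^ m"
  using assms
proof (induction m rule: nat_induct_at_least)
  case base
  then show ?case by simp
next
  case (Suc m)
  have m: "real m \<ge> 1" using Suc by simp
  have "(real m + 1) powr (real m + 1/2) = (real m + 1) ^ m * sqrt (real m + 1)"
    "real m powr (real m + 1/2) = real m ^ m * sqrt (real m)"
    using m by (simp_all add: powr_add powr_realpow powr_half_sqrt)
  moreover have "1 + 1 / real m = (real m + 1) / real m" using m by (simp add: field_simps)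
  ultimately have "(1 + 1 / real m) powr (real m + 1/2)
      = (real m + 1) ^ m * sqrt (real m + 1) / (real m ^ m * sqrt (real m))"
    using m by (simp add: powr_divide)
  then have step: "exp 1 * (real m ^ m * sqrt (real m)) \<le> (real m + 1) ^ m * sqrt (real m + 1)"
    using exp_one_le_one_plus_inverse_powr[OF Suc(1)] m by (simp add: pos_le_divide_eq)
  have "fact (Suc m) = (real m + 1) * fact m" by simp
  also have "\<dots> \<le> (real m + 1) * (exp 1 * sqrt (real m) * (real m / exp 1) ^ m)"
    using Suc.IH by (intro mult_left_mono) auto
  also have "\<dots> = exp 1 * (real m ^ m * sqrt (real m)) * (real m + 1) / exp 1 ^ m"
    by (simp add: power_divide field_simps)
  also have "\<dots> \<le> (real m + 1) ^ m * sqrt (real m + 1) * (real m + 1) / exp 1 ^ m"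
    using step by (intro divide_right_mono mult_right_mono) auto
  also have "\<dots> = exp 1 * sqrt (real (Suc m)) * (real (Suc m) / exp 1) ^ Suc m"
    by (simp add: power_divide field_simps add.commute)
  finally show ?case .
qed

text \<open>By log-convexity, \<open>Gamma (n + 1/2) \<le> sqrt (Gamma n * Gamma (n + 1))\<close>.\<close>
lemma Gamma_nat_plus_half_le:
  assumes "n \<ge> 1"
  shows "Gamma (real n + 1/2) \<le> fact n * real n powr (-1/2)"
proof -
  have n: "real n \<ge> 1" using assms by simp
  have Gamma_Suc_n: "Gamma (real n + 1) = fact n"
    using Gamma_fact[of n, where 'a=real] by (simp add: add.commute)
  then have Gamma_n: "Gamma (real n) = fact n / real n"
    using Gamma_plus1_pos[of "real n"] n by (simp add: field_simps)
  have "(ln \<circ> Gamma) ((1 - 1/2) *\<^sub>R real n + (1/2) *\<^sub>R (real n + 1))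
      \<le> (1 - 1/2) * (ln \<circ> Gamma) (real n) + (1/2) * (ln \<circ> Gamma) (real n + 1)"
    using n by (intro convex_onD[OF log_convex_Gamma_real]) auto
  also have "(1 - 1/2) *\<^sub>R real n + (1/2) *\<^sub>R (real n + 1) = real n + 1/2"
    by (simp add: field_simps)
  finally have "ln (Gamma (real n + 1/2)) \<le> ln (fact n / real n) / 2 + ln (fact n) / 2"
    by (simp add: Gamma_n Gamma_Suc_n)
  also have "\<dots> = ln (fact n * real n powr (-1/2))"
    using n by (simp add: ln_div ln_mult ln_powr) (simp add: field_simps)
  finally show ?thesis using n by (simp add: ln_le_cancel_iff)
qed

lemma Gamma_nat_plus_step_le:
  assumes "n \<ge> 1"
  shows "Gamma (real n + real j / 2 + 1) \<le> real n * exp (real j / (2 * real n))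
      * Gamma (real n + real j / 2)"
proof -
  have n: "real n \<ge> 1" using assms by simp
  have "real n + real j / 2 = real n * (1 + real j / (2 * real n))"
    using n by (simp add: field_simps)
  also have "\<dots> \<le> real n * exp (real j / (2 * real n))"
    using n by (intro mult_left_mono exp_ge_add_one_self) auto
  finally show ?thesis
    using n Gamma_plus1_pos[of "real n + real j / 2"] by (simp add: mult_right_mono less_imp_le)
qed

text \<open>The correction \<open>exp ((k - 1) (k - 2) / (4 n))\<close> vanishes for \<open>k \<le> 2\<close>, so that the case \<open>k = 2\<close>
  of the multinomial bound below is already the binomial bound needed for the edge factors.\<close>
lemma Gamma_nat_plus_half_multiple_le:
  assumes "n \<ge> 1" "k \<ge> 1"
  shows "Gamma (real n + real k / 2)
           \<le> fact n * real n powr (real k / 2 - 1) * exp ((real k - 1) * (real k - 2) / (4 * real n))"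
  using assms(2)
proof (induction k rule: less_induct)
  case (less k)
  have n: "real n \<ge> 1" using assms by simp
  consider "k = 1" | "k = 2" | "k \<ge> 3" using less.prems by linarith
  then show ?case
  proof cases
    case 1
    then show ?thesis using Gamma_nat_plus_half_le[OF assms(1)] by simp
  next
    case 2
    then show ?thesis using Gamma_fact[of n, where 'a=real] assms(1) by (simp add: add.commute)
  next
    case 3
    define j where "j = k - 2"
    have j: "real k = real j + 2" "j \<ge> 1" "j < k" using 3 by (auto simp: j_def)
    have kj: "real n + real k / 2 = real n + real j / 2 + 1" using j(1) by simp
    have "Gamma (real n + real k / 2) \<le> real n * exp (real j / (2 * real n))
        * Gamma (real n + real j / 2)"
      unfolding kj using Gamma_nat_plus_step_le[OF assms(1)] by simp
    also have "\<dots> \<le> (real n * exp (real j / (2 * real n))) *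
        (fact n * real n powr (real j / 2 - 1) * exp ((real j - 1) * (real j - 2) / (4 * real n)))"
      using less.IH[OF j(3) j(2)] n by (intro mult_left_mono) auto
    also have "\<dots> = fact n * (real n powr 1 * real n powr (real j / 2 - 1)) *
        exp (real j / (2 * real n) + (real j - 1) * (real j - 2) / (4 * real n))"
      using n by (simp add: exp_add mult_ac)
    also have "\<dots> \<le> fact n * real n powr (real k / 2 - 1) *
        exp ((real k - 1) * (real k - 2) / (4 * real n))"
    proof -
      have "real j / (2 * real n) + (real j - 1) * (real j - 2) / (4 * real n)
          \<le> (real k - 1) * (real k - 2) / (4 * real n)"
        using n j by (simp add: field_simps)
      moreover have "1 + (real j / 2 - 1) = real k / 2 - 1" using j(1) by (simp add: field_simps)
      then have "real n powr 1 * real n powr (real j / 2 - 1) = real n powr (real k / 2 - 1)"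
        unfolding powr_add[symmetric] by (simp only:)
      ultimately show ?thesis by (simp add: mult_left_mono)
    qed
    finally show ?thesis .
  qed
qed

section \<open>Maximum likelihood versus the KT mixture\<close>

lemma power_le_power_mult_exp:
  fixes x :: real
  assumes "x \<ge> 0"
  shows "x ^ w \<le> real w ^ w * exp (x - real w)"
proof (cases "w = 0")
  case False
  then have w: "real w > 0" by simp
  have "x / real w \<le> exp (x / real w - 1)"
    using exp_ge_add_one_self[of "x / real w - 1"] by simp
  then have "(x / real w) ^ w \<le> exp (x / real w - 1) ^ w"
    using assms w by (intro power_mono) auto
  also have "\<dots> = exp (x - real w)"
    using w by (simp add: exp_of_nat_mult[symmetric] field_simps)
  finally show ?thesis using w by (simp add: power_divide field_simps)
qed (use assms in simp)

lemma prod_power_le_empirical: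
  fixes p :: "'a \<Rightarrow> real" and w :: "'a \<Rightarrow> nat"
  assumes "finite I" and "\<And>i. i \<in> I \<Longrightarrow> p i \<ge> 0" and "(\<Sum>i\<in>I. p i) \<le> 1"
  shows "(\<Prod>i\<in>I. p i ^ w i) \<le> (\<Prod>i\<in>I. (real (w i) / real (\<Sum>j\<in>I. w j)) ^ w i)"
proof -
  define W where "W = (\<Sum>j\<in>I. w j)"
  have "(\<Prod>i\<in>I. p i ^ w i) * real W ^ W = (\<Prod>i\<in>I. (p i * real W) ^ w i)"
    by (simp add: power_mult_distrib prod.distrib W_def power_sum)
  also have "\<dots> \<le> (\<Prod>i\<in>I. real (w i) ^ w i * exp (p i * real W - real (w i)))"
    using assms(2) by (intro prod_mono conjI power_le_power_mult_exp) auto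
  also have "\<dots> = (\<Prod>i\<in>I. real (w i) ^ w i) * exp (\<Sum>i\<in>I. p i * real W - real (w i))"
    using assms(1) by (simp add: prod.distrib exp_sum)
  also have "(\<Sum>i\<in>I. p i * real W - real (w i)) = real W * ((\<Sum>i\<in>I. p i) - 1)"
    by (simp add: sum_subtractf sum_distrib_right[symmetric] W_def algebra_simps)
  finally have "(\<Prod>i\<in>I. p i ^ w i) * real W ^ W
      \<le> (\<Prod>i\<in>I. real (w i) ^ w i) * exp (real W * ((\<Sum>i\<in>I. p i) - 1))" .
  also have "\<dots> \<le> (\<Prod>i\<in>I. real (w i) ^ w i)"
    using assms(3) by (intro mult_left_le) (auto simp: mult_nonneg_nonpos prod_nonneg)
  finally have *: "(\<Prod>i\<in>I. p i ^ w i) * real W ^ W \<le> (\<Prod>i\<in>I. real (w i) ^ w i)" .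
  show ?thesis
  proof (cases "W = 0")
    case True
    then have "w i = 0" if "i \<in> I" for i using that assms(1) by (simp add: W_def)
    then show ?thesis by simp
  next
    case False
    have "(\<Prod>i\<in>I. (real (w i) / real W) ^ w i) = (\<Prod>i\<in>I. real (w i) ^ w i) / real W ^ W"
      by (simp add: power_divide prod_dividef W_def power_sum)
    then show ?thesis using * False by (simp add: W_def[symmetric] pos_le_divide_eq)
  qed
qed

text \<open>The Krichevsky--Trofimov probability of a word over a \<open>k\<close>-letter alphabet with letter
  counts \<open>c\<close>: the Dirichlet(1/2, \<dots>, 1/2) mixture of the multinomial likelihoods.\<close>
definition KT_counts :: "nat \<Rightarrow> (nat \<Rightarrow> nat) \<Rightarrow> real" where
  "KT_counts k c = Gamma (real k / 2) / Gamma (1/2) ^ k * (\<Prod>a<k. Gamma (real (c a) + 1/2)) /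
     Gamma (real (\<Sum>a<k. c a) + real k / 2)"

lemma KT_counts_nonneg: "k \<ge> 1 \<Longrightarrow> KT_counts k c \<ge> 0"
  unfolding KT_counts_def
  by (intro divide_nonneg_nonneg mult_nonneg_nonneg prod_nonneg less_imp_le Gamma_real_pos)
    (auto intro!: add_nonneg_pos sum_nonneg)

definition multinomial_regret_bound :: "nat \<Rightarrow> nat \<Rightarrow> real" where
  "multinomial_regret_bound k n =
     exp (1 + (real k - 1) * (real k - 2) / (4 * real n))
         * real n powr ((real k - 1) / 2) / Gamma (real k / 2)"

lemma empirical_likelihood_le_KT_counts:
  assumes "k \<ge> 1" and "(\<Sum>a<k. c a) = n" and "n \<ge> 1"
  shows "(\<Prod>a<k. (real (c a) / real n) ^ c a)
    \<le> multinomial_regret_bound k n * KT_counts k c"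
proof -
  define E where "E = exp (1 + (real k - 1) * (real k - 2) / (4 * real n))
      * real n powr ((real k - 1) / 2)"
  have n: "real n \<ge> 1" using assms(3) by simp
  have pow_sum: "(\<Prod>a<k. x ^ c a) = x ^ n" for x :: real
    using assms(2) power_sum[of x c "{..<k}"] by simp
  have Gk: "Gamma (real k / 2) > 0" using assms(1) by simp
  have "sqrt pi ^ k * ((\<Prod>a<k. real (c a) ^ c a) / exp 1 ^ n)
      = (\<Prod>a<k. sqrt pi * (real (c a) / exp 1) ^ c a)"
    by (simp add: prod.distrib power_divide prod_dividef pow_sum)
  also have "\<dots> \<le> (\<Prod>a<k. Gamma (real (c a) + 1/2))"
    by (intro prod_mono conjI Gamma_nat_plus_half_ge) auto
  finally have num: "sqrt pi ^ k * ((\<Prod>a<k. real (c a) ^ c a) / exp 1 ^ n) \<le>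
      (\<Prod>a<k. Gamma (real (c a) + 1/2))" .
  have "Gamma (real n + real k / 2)
      \<le> fact n * real n powr (real k / 2 - 1) * exp ((real k - 1) * (real k - 2) / (4 * real n))"
    using Gamma_nat_plus_half_multiple_le assms by simp
  also have "\<dots> \<le> (exp 1 * sqrt (real n) * (real n / exp 1) ^ n) * real n powr (real k / 2 - 1) *
      exp ((real k - 1) * (real k - 2) / (4 * real n))"
    using fact_le_Stirling[OF assms(3)] by (intro mult_right_mono) auto
  also have "\<dots> = E * (real n ^ n / exp 1 ^ n)"
  proof -
    have "sqrt (real n) * real n powr (real k / 2 - 1) = real n powr ((real k - 1) / 2)"
      using n by (simp add: powr_half_sqrt[symmetric] powr_add[symmetric] field_simps)
    then show ?thesis by (simp add: E_def exp_add power_divide mult_ac)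
  qed
  finally have den: "Gamma (real n + real k / 2) \<le> E * (real n ^ n / exp 1 ^ n)" .
  have "(\<Prod>a<k. (real (c a) / real n) ^ c a)
      = E / Gamma (real k / 2) * (Gamma (real k / 2) / sqrt pi ^ k *
          (sqrt pi ^ k * ((\<Prod>a<k. real (c a) ^ c a) / exp 1 ^ n)) / (E * (real n ^ n / exp 1 ^ n)))"
    using Gk n by (simp add: E_def power_divide prod_dividef pow_sum field_simps)
  also have "\<dots> \<le> E / Gamma (real k / 2) * (Gamma (real k / 2) / sqrt pi ^ k *
          (\<Prod>a<k. Gamma (real (c a) + 1/2)) / Gamma (real n + real k / 2))"
    using num den Gk assms(1) n prod_nonneg[of "{..<k}" "\<lambda>a. Gamma (real (c a) + 1/2)"]
    by (intro mult_left_mono frac_le mult_left_mono) (auto simp: E_def add_nonneg_pos)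
  finally show ?thesis
    by (simp add: KT_counts_def multinomial_regret_bound_def E_def assms(2) Gamma_one_half_real)
qed

lemma prod_power_le_KT_counts:
  assumes "k \<ge> 1" and "(\<Sum>a<k. c a) = n" and "n \<ge> 1"
    and "\<And>a. a < k \<Longrightarrow> p a \<ge> 0" and "(\<Sum>a<k. p a) \<le> 1"
  shows "(\<Prod>a<k. p a ^ c a)
    \<le> multinomial_regret_bound k n * KT_counts k c"
  using prod_power_le_empirical[of "{..<k}" p c] empirical_likelihood_le_KT_counts[OF assms(1-3)]
    assms(2,4,5) by simp

lemma KT_counts_two: "KT_counts 2 (\<lambda>i. if i = 0 then a else b)
    = Beta (real a + 1/2) (real b + 1/2) / pi"
  by (simp add: KT_counts_def Beta_def numeral_2_eq_2 Gamma_one_half_real add_ac)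

lemma Beta_nat_plus_half_nonneg: "Beta (real a + 1/2) (real b + 1/2) \<ge> 0"
  by (simp add: Beta_def less_imp_le add_nonneg_pos)

lemma binomial_likelihood_le_Beta:
  fixes y :: real
  assumes "0 \<le> y" "y \<le> 1" and "a + b \<le> n\<^sup>2" and "n \<ge> 1"
  shows "y ^ a * (1 - y) ^ b \<le> exp 1 * real n * (Beta (real a + 1/2) (real b + 1/2) / pi)"
proof (cases "a + b = 0")
  case True
  have "1 * 1 \<le> exp 1 * real n"
    using assms(4) by (intro mult_mono) auto
  then show ?thesis using True by (simp add: Beta_def Gamma_one_half_real)
next
  case False
  define c where "c i = (if i = 0 then a else b)" for i :: nat
  define p where "p i = (if i = 0 then y else 1 - y)" for i :: nat
  have "y ^ a * (1 - y) ^ b = (\<Prod>i<2. p i ^ c i)"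
    by (simp add: p_def c_def numeral_2_eq_2)
  also have "\<dots> \<le> exp 1 * real (a + b) powr (1/2) * KT_counts 2 c"
    using prod_power_le_KT_counts[of 2 c "a + b" p] False assms(1,2)
    by (simp add: c_def p_def numeral_2_eq_2 multinomial_regret_bound_def)
  also have "\<dots> \<le> exp 1 * real n * (Beta (real a + 1/2) (real b + 1/2) / pi)"
  proof -
    have "real (a + b) \<le> real n ^ 2" using assms(3) by (metis of_nat_le_iff of_nat_power)
    then have "real (a + b) powr (1/2) \<le> real n"
      by (simp add: powr_half_sqrt real_le_lsqrt)
    then show ?thesis
      unfolding c_def KT_counts_two
      by (intro mult_left_mono mult_right_mono) (auto simp: Beta_nat_plus_half_nonneg)
  qed
  finally show ?thesis .
qed

section \<open>Block counts of a labelled graph\<close>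

lemma cnt_eq_sum: "cnt n z a = (\<Sum>i<n. of_bool (z i = a))"
proof -
  have "{i. i < n \<and> z i = a} = {..<n} \<inter> {i. z i = a}" by auto
  then show ?thesis by (simp add: cnt_def sum_of_bool_eq)
qed

lemma cnt_le: "cnt n z a \<le> n"
  unfolding cnt_def by (rule order_trans[OF card_mono[of "{..<n}"]]) auto

lemma sum_cnt:
  assumes "z \<in> {..<n} \<rightarrow>\<^sub>E {..<k}"
  shows "(\<Sum>a<k. cnt n z a) = n"
proof -
  have "(\<Sum>a<k. cnt n z a) = (\<Sum>i<n. \<Sum>a<k. of_bool (z i = a))"
    unfolding cnt_eq_sum by (rule sum.swap)
  also have "\<dots> = (\<Sum>i<n. 1)"
    using assms by (intro sum.cong refl) (auto simp: of_bool_def sum.delta')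
  finally show ?thesis by simp
qed

lemma Ocnt_sym:
  assumes "adjacency n x"
  shows "Ocnt n z x a b = Ocnt n z x b a"
proof -
  have "Ocnt n z x a b = (\<Sum>j<n. \<Sum>i<n. of_bool (z i = a \<and> z j = b \<and> x i j))"
    unfolding Ocnt_def by (rule sum.swap)
  also have "\<dots> = Ocnt n z x b a"
    unfolding Ocnt_def using assms unfolding adjacency_def
    by (intro sum.cong refl) (auto simp: conj_commute)
  finally show ?thesis .
qed

lemma Ocnt_le_npairs:
  assumes "adjacency n x"
  shows "Ocnt n z x a b \<le> npairs n z a b"
proof (cases "a = b")
  case False
  have "Ocnt n z x a b \<le> (\<Sum>i<n. \<Sum>j<n. of_bool (z i = a) * of_bool (z j = b))"
    unfolding Ocnt_def by (intro sum_mono) auto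
  also have "\<dots> = npairs n z a b"
    using False by (simp only: npairs_def cnt_eq_sum sum_product) simp
  finally show ?thesis .
next
  case True
  have row: "(\<Sum>j<n. of_bool (z i = a \<and> z j = a \<and> x i j)) \<le> of_bool (z i = a) * (cnt n z a - 1)"
    if "i < n" for i
  proof (cases "z i = a")
    case True
    have "(\<Sum>j<n. (of_bool (z i = a \<and> z j = a \<and> x i j) :: nat)) \<le> (\<Sum>j<n. of_bool (z j = a \<and> j \<noteq> i))"
      using assms that unfolding adjacency_def by (intro sum_mono) auto
    also have "\<dots> = card ({..<n} \<inter> {j. z j = a \<and> j \<noteq> i})"
      by (subst sum_of_bool_eq) auto
    also have "{..<n} \<inter> {j. z j = a \<and> j \<noteq> i} = {j. j < n \<and> z j = a} - {i}" by auto
    also have "card \<dots> = cnt n z a - 1" using True that by (simp add: cnt_def)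
    finally show ?thesis using True by simp
  qed simp
  have "Ocnt n z x a b \<le> (\<Sum>i<n. of_bool (z i = a) * (cnt n z a - 1))"
    unfolding Ocnt_def True[symmetric] by (rule sum_mono, rule row) auto
  also have "\<dots> = npairs n z a b"
    using True by (simp only: npairs_def cnt_eq_sum sum_distrib_right) simp
  finally show ?thesis .
qed

lemma sum_square_sym_zero_diag:
  fixes f :: "nat \<Rightarrow> nat \<Rightarrow> 'a::comm_semiring_1"
  assumes "\<And>i j. i < N \<Longrightarrow> j < N \<Longrightarrow> f i j = f j i" and "\<And>i. i < N \<Longrightarrow> f i i = 0"
  shows "(\<Sum>i<N. \<Sum>j<N. f i j) = 2 * (\<Sum>i<N. \<Sum>j<i. f i j)"
  using assms
proof (induction N)
  case (Suc N)
  have "(\<Sum>i<N. f i N) = (\<Sum>j<N. f N j)" using Suc.prems(1) by (intro sum.cong) auto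
  then show ?case
    using Suc.IH Suc.prems by (simp add: sum.distrib mult_2 algebra_simps)
qed simp

lemma even_Ocnt_diag:
  assumes "adjacency n x"
  shows "even (Ocnt n z x a a)"
proof -
  have "Ocnt n z x a a = 2 * (\<Sum>i<n. \<Sum>j<i. of_bool (z i = a \<and> z j = a \<and> x i j))"
    unfolding Ocnt_def using assms by (intro sum_square_sym_zero_diag) (auto simp: adjacency_def)
  then show ?thesis by simp
qed

definition upper_pairs :: "nat \<Rightarrow> (nat \<times> nat) set" where
  "upper_pairs k = {(a, b). a \<le> b \<and> b < k}"

lemma finite_upper_pairs: "finite (upper_pairs k)"
  by (rule finite_subset[of _ "{..<k} \<times> {..<k}"]) (auto simp: upper_pairs_def)

lemma card_upper_pairs: "2 * card (upper_pairs k) = k * (k + 1)"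
proof (induction k)
  case (Suc k)
  have "upper_pairs (Suc k) = upper_pairs k \<union> (\<lambda>a. (a, k)) ` {..k}"
    by (auto simp: upper_pairs_def)
  moreover have "upper_pairs k \<inter> (\<lambda>a. (a, k)) ` {..k} = {}" by (auto simp: upper_pairs_def)
  ultimately have "card (upper_pairs (Suc k)) = card (upper_pairs k) + (k + 1)"
    by (simp add: card_Un_disjoint finite_upper_pairs card_image inj_on_def)
  then show ?case using Suc.IH by simp
qed (simp add: upper_pairs_def)

lemma prod_square_sym_eq_upper_pairs:
  fixes f :: "nat \<Rightarrow> nat \<Rightarrow> 'a::comm_monoid_mult"
  assumes "\<And>a b. a < k \<Longrightarrow> b < k \<Longrightarrow> f a b = f b a"
  shows "(\<Prod>a<k. \<Prod>b<k. f a b) = (\<Prod>(a, b)\<in>upper_pairs k. if a = b then f a a else f a b * f a b)"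
proof -
  define g where "g c = (min (fst c) (snd c), max (fst c) (snd c))" for c :: "nat \<times> nat"
  have fiber: "{c \<in> {..<k} \<times> {..<k}. g c = (a, b)} = {(a, b), (b, a)}"
      if "(a, b) \<in> upper_pairs k" for a b
    using that by (auto simp: g_def upper_pairs_def min_def max_def split: if_splits)
  have "(\<Prod>a<k. \<Prod>b<k. f a b) = (\<Prod>c\<in>{..<k} \<times> {..<k}. f (fst c) (snd c))"
    by (simp add: prod.cartesian_product case_prod_beta)
  also have "\<dots> = (\<Prod>p\<in>upper_pairs k. \<Prod>c\<in>{c \<in> {..<k} \<times> {..<k}. g c = p}. f (fst c) (snd c))"
    using finite_upper_pairs[of k]
    by (intro prod.group[symmetric]) (auto simp: g_def upper_pairs_def)
  also have "\<dots> = (\<Prod>(a, b)\<in>upper_pairs k. if a = b then f a a else f a b * f a b)"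
    using assms by (intro prod.cong refl) (auto simp: fiber upper_pairs_def)
  finally show ?thesis .
qed

text \<open>\<open>Ocnt\<close> counts ordered pairs of nodes, so an edge inside a block is counted twice.\<close>
definition block_edges :: "nat \<Rightarrow> (nat \<Rightarrow> nat) \<Rightarrow> (nat \<Rightarrow> nat \<Rightarrow> bool) \<Rightarrow> nat \<Rightarrow> nat \<Rightarrow> nat" where
  "block_edges n z x a b = (if a = b then Ocnt n z x a a div 2 else Ocnt n z x a b)"

definition block_nonedges :: "nat \<Rightarrow> (nat \<Rightarrow> nat) \<Rightarrow> (nat \<Rightarrow> nat \<Rightarrow> bool) \<Rightarrow> nat \<Rightarrow> nat \<Rightarrow> nat" where
  "block_nonedges n z x a b =
     (if a = b then (npairs n z a a - Ocnt n z x a a) div 2 else npairs n z a b - Ocnt n z x a b)"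

lemma block_edges_add_nonedges_le:
  assumes "adjacency n x"
  shows "block_edges n z x a b + block_nonedges n z x a b \<le> n\<^sup>2"
proof -
  have "npairs n z a b \<le> cnt n z a * cnt n z b" by (simp add: npairs_def)
  also have "\<dots> \<le> n * n" by (intro mult_le_mono cnt_le)
  finally show ?thesis
    using Ocnt_le_npairs[OF assms, of z a b]
    by (auto simp: block_edges_def block_nonedges_def power2_eq_square)
qed

lemma rpow0_of_nat: "y \<ge> 0 \<Longrightarrow> rpow0 y (real m) = y ^ m"
  by (auto simp: rpow0_def powr_realpow)

lemma real_block_counts_diag:
  assumes "adjacency n x"
  shows "real (block_edges n z x a a) = real (Ocnt n z x a a) / 2"
    and "real (block_nonedges n z x a a) = (real (npairs n z a a) - real (Ocnt n z x a a)) / 2"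
proof -
  have "even (npairs n z a a)" by (auto simp: npairs_def)
  then have "even (npairs n z a a - Ocnt n z x a a)"
    using even_Ocnt_diag[OF assms] by (simp add: dvd_diff_nat)
  then show "real (block_edges n z x a a) = real (Ocnt n z x a a) / 2"
    and "real (block_nonedges n z x a a) = (real (npairs n z a a) - real (Ocnt n z x a a)) / 2"
    using even_Ocnt_diag[OF assms] Ocnt_le_npairs[OF assms, of z a a]
    by (simp_all add: block_edges_def block_nonedges_def real_of_nat_div of_nat_diff)
qed

lemma real_block_counts_offdiag:
  assumes "adjacency n x" and "a \<noteq> b"
  shows "real (block_edges n z x a b) = real (Ocnt n z x a b)"
    and "real (block_nonedges n z x a b) = real (npairs n z a b) - real (Ocnt n z x a b)"
  using assms(2) Ocnt_le_npairs[OF assms(1), of z a b]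
  by (simp_all add: block_edges_def block_nonedges_def of_nat_diff)

lemma rpow0_half_square: "e \<ge> 0 \<Longrightarrow> rpow0 y (e / 2) * rpow0 y (e / 2) = rpow0 y e"
  by (auto simp: rpow0_def powr_add[symmetric])

lemma prob_zx_eq_block_product:
  assumes adj: "adjacency n x" and sym: "\<And>a b. a < k \<Longrightarrow> b < k \<Longrightarrow> P a b = P b a"
  shows "prob_zx k n \<pi> P z x = (\<Prod>a<k. \<pi> a ^ cnt n z a) *
    (\<Prod>(a, b)\<in>upper_pairs k. rpow0 (P a b) (real (block_edges n z x a b)) *
       rpow0 (1 - P a b) (real (block_nonedges n z x a b)))"
proof -
  define Oc where "Oc a b = real (Ocnt n z x a b)" for a b
  define Np where "Np a b = real (npairs n z a b)" for a b
  define f where "f a b = rpow0 (P a b) (Oc a b / 2)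
      * rpow0 (1 - P a b) ((Np a b - Oc a b) / 2)" for a b
  have "f a b = f b a" if "a < k" "b < k" for a b
    using sym[OF that] Ocnt_sym[OF adj] by (simp add: f_def Oc_def Np_def npairs_def mult.commute)
  then have "(\<Prod>a<k. \<Prod>b<k. f a b) = (\<Prod>(a, b)\<in>upper_pairs k. if a = b then f a a else f a b * f a b)"
    by (rule prod_square_sym_eq_upper_pairs)
  also have "\<dots> = (\<Prod>(a, b)\<in>upper_pairs k. rpow0 (P a b) (real (block_edges n z x a b)) *
       rpow0 (1 - P a b) (real (block_nonedges n z x a b)))"
  proof (intro prod.cong refl, clarify)
    fix a b
    have "Oc a b \<le> Np a b" using Ocnt_le_npairs[OF adj] by (simp add: Oc_def Np_def)
    then have "f a b * f a b = rpow0 (P a b) (Oc a b) * rpow0 (1 - P a b) (Np a b - Oc a b)"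
      unfolding f_def using rpow0_half_square[of "Oc a b"] rpow0_half_square[of "Np a b - Oc a b"]
      by (simp add: Oc_def mult_ac)
    then show "(if a = b then f a a else f a b * f a b)
        = rpow0 (P a b) (real (block_edges n z x a b)) *
       rpow0 (1 - P a b) (real (block_nonedges n z x a b))"
      by (cases "a = b")
        (simp_all add: f_def Oc_def Np_def real_block_counts_diag[OF adj]
            real_block_counts_offdiag[OF adj])
  qed
  finally show ?thesis by (simp add: prob_zx_def f_def Oc_def Np_def)
qed

section \<open>Beta and Dirichlet integrals\<close>

lemma nn_integral_Beta:
  fixes a b :: real
  assumes "a > 0" "b > 0"
  shows "(\<integral>\<^sup>+ x. ennreal (indicator {0<..<1} x * x powr (a - 1) * (1 - x) powr (b - 1)) \<partial>lborel)
    = ennreal (Beta a b)"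
proof -
  have "(\<integral>\<^sup>+ x. ennreal (indicator {0<..<1} x * x powr (a - 1) * (1 - x) powr (b - 1)) \<partial>lborel)
      = (\<integral>\<^sup>+ x. ennreal (indicator {0..1} x * (x powr (a - 1) * (1 - x) powr (b - 1))) \<partial>lborel)"
    by (intro nn_integral_cong) (auto simp: indicator_def)
  also have "\<dots> = ennreal (Beta a b)"
    by (rule nn_integral_has_integral_lebesgue[OF _ has_integral_Beta_real[OF assms]]) auto
  finally show ?thesis .
qed

lemma nn_integral_Beta_scaled:
  fixes a b c :: real
  assumes "a > 0" "b > 0" "c > 0"
  shows "(\<integral>\<^sup>+ y. ennreal (indicator {0<..<c} y * y powr (a - 1) * (c - y) powr (b - 1)) \<partial>lborel)
    = ennreal (c powr (a + b - 1) * Beta a b)"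
proof -
  define f where "f y = ennreal (indicator {0<..<c} y * y powr (a - 1) * (c - y) powr (b - 1))" for y
  have scale: "f (c * x) = ennreal (c powr (a + b - 2)) *
      ennreal (indicator {0<..<1} x * x powr (a - 1) * (1 - x) powr (b - 1))" for x
  proof (cases "0 < x \<and> x < 1")
    case True
    have "c - c * x = c * (1 - x)" by (simp add: algebra_simps)
    then have "(c * x) powr (a - 1) * (c - c * x) powr (b - 1)
        = (c powr (a - 1) * c powr (b - 1)) * (x powr (a - 1) * (1 - x) powr (b - 1))"
      using True assms by (simp add: powr_mult mult_ac)
    also have "c powr (a - 1) * c powr (b - 1) = c powr (a + b - 2)"
      by (simp add: powr_add[symmetric])
    finally show ?thesis
      using True assms by (simp add: f_def indicator_def ennreal_mult'[symmetric])
  next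
    case False
    then have "c * x \<notin> {0<..<c}"
      using assms by (auto simp: zero_less_mult_iff)
    then show ?thesis using False by (auto simp: f_def indicator_def)
  qed
  have f: "f \<in> borel_measurable borel" unfolding f_def by measurable
  have "integral\<^sup>N lborel f = ennreal \<bar>c\<bar> * (\<integral>\<^sup>+ x. f (0 + c * x) \<partial>lborel)"
    by (rule nn_integral_real_affine[OF f]) (use assms in auto)
  also have "\<dots> = ennreal c * (ennreal (c powr (a + b - 2)) * ennreal (Beta a b))"
    using assms by (simp add: scale nn_integral_cmult nn_integral_Beta[OF assms(1,2)])
  also have "\<dots> = ennreal (c powr (a + b - 1) * Beta a b)"
  proof -
    have "c * c powr (a + b - 2) = c powr (a + b - 1)"
      using assms by (simp add: powr_add[symmetric] powr_mult_base)
    then show ?thesis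
      using assms by (simp add: ennreal_mult[symmetric] Beta_def mult.assoc[symmetric])
  qed
  finally show ?thesis unfolding f_def .
qed

lemma nn_integral_Beta_slack:
  fixes a b t S :: real
  assumes "a > 0" "b > 0"
  shows "(\<integral>\<^sup>+ y. ennreal (indicator {0<..} y * y powr (a - 1) *
        (indicator {0<..} (t - (S + y)) * (t - (S + y)) powr (b - 1))) \<partial>lborel)
      = ennreal (Beta a b * (indicator {0<..} (t - S) * (t - S) powr (a + b - 1)))"
proof (cases "t - S > 0")
  case True
  have "(\<integral>\<^sup>+ y. ennreal (indicator {0<..} y * y powr (a - 1) *
        (indicator {0<..} (t - (S + y)) * (t - (S + y)) powr (b - 1))) \<partial>lborel)
      = (\<integral>\<^sup>+ y. ennreal (indicator {0<..<t - S} y * y powr (a - 1) * ((t - S) - y) powr (b - 1))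
          \<partial>lborel)"
    by (intro nn_integral_cong) (auto simp: indicator_def algebra_simps)
  also have "\<dots> = ennreal ((t - S) powr (a + b - 1) * Beta a b)"
    by (rule nn_integral_Beta_scaled) (use assms True in auto)
  finally show ?thesis using True by (simp add: mult_ac)
next
  case False
  then have "(\<integral>\<^sup>+ y. ennreal (indicator {0<..} y * y powr (a - 1) *
        (indicator {0<..} (t - (S + y)) * (t - (S + y)) powr (b - 1))) \<partial>lborel)
      = (\<integral>\<^sup>+ y. 0 \<partial>(lborel :: real measure))"
    by (intro nn_integral_cong) (use False in \<open>auto simp: indicator_def\<close>)
  then show ?thesis using False by simp
qed

text \<open>The unnormalised Dirichlet density on \<open>{u. 0 < u, \<Sum>u < t}\<close>, the last weight being
  attached to the slack \<open>t - \<Sum>u\<close>.\<close>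
definition dirichlet_kernel :: "nat \<Rightarrow> (nat \<Rightarrow> real) \<Rightarrow> real \<Rightarrow> real \<Rightarrow> (nat \<Rightarrow> real) \<Rightarrow> real" where
  "dirichlet_kernel m \<alpha> \<beta> t u = (\<Prod>j<m. indicator {0<..} (u j) * u j powr (\<alpha> j - 1)) *
     (indicator {0<..} (t - (\<Sum>j<m. u j)) * (t - (\<Sum>j<m. u j)) powr (\<beta> - 1))"

lemma dirichlet_kernel_nonneg: "dirichlet_kernel m \<alpha> \<beta> t u \<ge> 0"
  unfolding dirichlet_kernel_def by (intro mult_nonneg_nonneg prod_nonneg) (auto simp: indicator_def)

lemma dirichlet_kernel_measurable [measurable]:
  "dirichlet_kernel m \<alpha> \<beta> t \<in> borel_measurable (PiM {..<m} (\<lambda>_. lborel))"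
  unfolding dirichlet_kernel_def by measurable

lemma product_sigma_finite_lborel: "product_sigma_finite (\<lambda>_. lborel :: real measure)"
  by (simp add: product_sigma_finite_def sigma_finite_lborel)

lemma dirichlet_kernel_Suc_fun_upd:
  "dirichlet_kernel (Suc m) \<alpha> \<beta> t (u(m := y)) =
    (\<Prod>j<m. indicator {0<..} (u j) * u j powr (\<alpha> j - 1)) * (indicator {0<..} y * y powr (\<alpha> m - 1) *
      (indicator {0<..} (t - ((\<Sum>j<m. u j) + y)) * (t - ((\<Sum>j<m. u j) + y)) powr (\<beta> - 1)))"
proof -
  have "(\<Prod>j<m. indicator {0<..} ((u(m := y)) j) * (u(m := y)) j powr (\<alpha> j - 1))
      = (\<Prod>j<m. indicator {0<..} (u j) * u j powr (\<alpha> j - 1))"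
    by (intro prod.cong) auto
  moreover have "(\<Sum>j<m. (u(m := y)) j) = (\<Sum>j<m. u j)" by (intro sum.cong) auto
  ultimately show ?thesis by (simp add: dirichlet_kernel_def mult_ac)
qed

lemma nn_integral_dirichlet_kernel_last:
  assumes "\<alpha> m > 0" "\<beta> > 0"
  shows "(\<integral>\<^sup>+ y. ennreal (dirichlet_kernel (Suc m) \<alpha> \<beta> t (u(m := y))) \<partial>lborel)
    = ennreal (Beta (\<alpha> m) \<beta>) * ennreal (dirichlet_kernel m \<alpha> (\<alpha> m + \<beta>) t u)"
proof -
  define C where "C = (\<Prod>j<m. indicator {0<..} (u j) * u j powr (\<alpha> j - 1))"
  define S where "S = (\<Sum>j<m. u j)"
  have C: "C \<ge> 0" unfolding C_def by (intro prod_nonneg) (auto simp: indicator_def)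
  have "(\<integral>\<^sup>+ y. ennreal (dirichlet_kernel (Suc m) \<alpha> \<beta> t (u(m := y))) \<partial>lborel)
      = (\<integral>\<^sup>+ y. ennreal C * ennreal (indicator {0<..} y * y powr (\<alpha> m - 1) *
          (indicator {0<..} (t - (S + y)) * (t - (S + y)) powr (\<beta> - 1))) \<partial>lborel)"
    unfolding dirichlet_kernel_Suc_fun_upd C_def[symmetric] S_def[symmetric] using C
    by (intro nn_integral_cong) (simp add: ennreal_mult)
  also have "\<dots> = ennreal C * ennreal (Beta (\<alpha> m) \<beta> *
      (indicator {0<..} (t - S) * (t - S) powr (\<alpha> m + \<beta> - 1)))"
    by (subst nn_integral_cmult) (auto simp: nn_integral_Beta_slack[OF assms])
  also have "\<dots> = ennreal (Beta (\<alpha> m) \<beta>) * ennreal (dirichlet_kernel m \<alpha> (\<alpha> m + \<beta>) t u)"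
    using C assms
    by (simp add: dirichlet_kernel_def C_def[symmetric] S_def[symmetric] ennreal_mult[symmetric]
        Beta_def less_imp_le mult_ac)
  finally show ?thesis .
qed

lemma nn_integral_dirichlet_kernel_Suc:
  assumes "\<alpha> m > 0" "\<beta> > 0"
  shows "(\<integral>\<^sup>+ u. ennreal (dirichlet_kernel (Suc m) \<alpha> \<beta> t u) \<partial>PiM {..<Suc m} (\<lambda>_. lborel))
    = ennreal (Beta (\<alpha> m) \<beta>) *
      (\<integral>\<^sup>+ u. ennreal (dirichlet_kernel m \<alpha> (\<alpha> m + \<beta>) t u) \<partial>PiM {..<m} (\<lambda>_. lborel))"
proof -
  interpret product_sigma_finite "\<lambda>_. lborel :: real measure" by (rule product_sigma_finite_lborel)
  have "(\<integral>\<^sup>+ u. ennreal (dirichlet_kernel (Suc m) \<alpha> \<beta> t u) \<partial>PiM {..<Suc m} (\<lambda>_. lborel))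
     = (\<integral>\<^sup>+ u. \<integral>\<^sup>+ y. ennreal (dirichlet_kernel (Suc m) \<alpha> \<beta> t (u(m := y))) \<partial>lborel
          \<partial>PiM {..<m} (\<lambda>_. lborel))"
    unfolding lessThan_Suc by (rule product_nn_integral_insert) (auto simp flip: lessThan_Suc)
  also have "\<dots> = (\<integral>\<^sup>+ u. ennreal (Beta (\<alpha> m) \<beta>) * ennreal (dirichlet_kernel m \<alpha> (\<alpha> m + \<beta>) t u)
      \<partial>PiM {..<m} (\<lambda>_. lborel))"
    by (simp add: nn_integral_dirichlet_kernel_last[of \<alpha> m \<beta>, OF assms])
  also have "\<dots> = ennreal (Beta (\<alpha> m) \<beta>) *
      (\<integral>\<^sup>+ u. ennreal (dirichlet_kernel m \<alpha> (\<alpha> m + \<beta>) t u) \<partial>PiM {..<m} (\<lambda>_. lborel))"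
    by (rule nn_integral_cmult) auto
  finally show ?thesis .
qed

lemma nn_integral_dirichlet_kernel:
  assumes "\<And>j. j < m \<Longrightarrow> \<alpha> j > 0" "\<beta> > 0" "t > 0"
  shows "(\<integral>\<^sup>+ u. ennreal (dirichlet_kernel m \<alpha> \<beta> t u) \<partial>PiM {..<m} (\<lambda>_. lborel))
    = ennreal (t powr ((\<Sum>j<m. \<alpha> j) + \<beta> - 1) * (\<Prod>j<m. Gamma (\<alpha> j)) * Gamma \<beta>
        / Gamma ((\<Sum>j<m. \<alpha> j) + \<beta>))"
  using assms(1,2)
proof (induction m arbitrary: \<beta>)
  case 0
  interpret P: product_sigma_finite "\<lambda>_. lborel :: real measure"
    by (rule product_sigma_finite_lborel)
  have "(\<integral>\<^sup>+ u. ennreal (dirichlet_kernel 0 \<alpha> \<beta> t u) \<partial>PiM {..<0} (\<lambda>_. lborel))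
      = ennreal (dirichlet_kernel 0 \<alpha> \<beta> t (\<lambda>_. undefined))"
    by (simp add: P.nn_integral_empty)
  moreover have "Gamma \<beta> \<noteq> 0" using Gamma_real_pos[OF 0(2)] by simp
  ultimately show ?case
    using assms(3) by (simp add: dirichlet_kernel_def)
next
  case (Suc m)
  have \<alpha>: "\<alpha> m > 0" "(\<Sum>j<m. \<alpha> j) \<ge> 0" "(\<Prod>j<m. Gamma (\<alpha> j)) \<ge> 0"
    using Suc.prems(1) by (auto intro!: sum_nonneg prod_nonneg simp: less_imp_le)
  have "(\<integral>\<^sup>+ u. ennreal (dirichlet_kernel (Suc m) \<alpha> \<beta> t u) \<partial>PiM {..<Suc m} (\<lambda>_. lborel))
    = ennreal (Beta (\<alpha> m) \<beta>) * ennreal (t powr ((\<Sum>j<m. \<alpha> j) + (\<alpha> m + \<beta>) - 1) *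
        (\<Prod>j<m. Gamma (\<alpha> j)) * Gamma (\<alpha> m + \<beta>) / Gamma ((\<Sum>j<m. \<alpha> j) + (\<alpha> m + \<beta>)))"
    using Suc by (simp add: nn_integral_dirichlet_kernel_Suc add_pos_pos)
  also have "\<dots> = ennreal (t powr ((\<Sum>j<Suc m. \<alpha> j) + \<beta> - 1) * (\<Prod>j<Suc m. Gamma (\<alpha> j)) * Gamma \<beta>
      / Gamma ((\<Sum>j<Suc m. \<alpha> j) + \<beta>))"
  proof -
    have G: "Gamma (\<alpha> m + \<beta>) > 0" "Gamma ((\<Sum>j<m. \<alpha> j) + (\<alpha> m + \<beta>)) > 0"
      using \<alpha> Suc.prems(2) by (simp_all add: add_nonneg_pos add_pos_pos)
    have "Beta (\<alpha> m) \<beta> * (t powr ((\<Sum>j<m. \<alpha> j) + (\<alpha> m + \<beta>) - 1) *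
        (\<Prod>j<m. Gamma (\<alpha> j)) * Gamma (\<alpha> m + \<beta>) / Gamma ((\<Sum>j<m. \<alpha> j) + (\<alpha> m + \<beta>)))
      = t powr ((\<Sum>j<Suc m. \<alpha> j) + \<beta> - 1) * (\<Prod>j<Suc m. Gamma (\<alpha> j)) * Gamma \<beta>
        / Gamma ((\<Sum>j<Suc m. \<alpha> j) + \<beta>)"
      using G(1) unfolding Beta_def by (simp add: field_simps add_ac)
    moreover have "Beta (\<alpha> m) \<beta> \<ge> 0" using \<alpha> Suc.prems(2) by (simp add: Beta_def less_imp_le)
    moreover have "t powr ((\<Sum>j<m. \<alpha> j) + (\<alpha> m + \<beta>) - 1) * (\<Prod>j<m. Gamma (\<alpha> j)) *
        Gamma (\<alpha> m + \<beta>) / Gamma ((\<Sum>j<m. \<alpha> j) + (\<alpha> m + \<beta>)) \<ge> 0"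
      using G \<alpha> by simp
    ultimately show ?thesis by (simp add: ennreal_mult[symmetric])
  qed
  finally show ?case .
qed

section \<open>The KT integral as a sum over labellings\<close>

definition simplex_coords :: "nat \<Rightarrow> (nat \<Rightarrow> real) \<Rightarrow> bool" where
  "simplex_coords k u \<longleftrightarrow> (\<forall>j<k - 1. 0 < u j) \<and> 0 < 1 - (\<Sum>j<k - 1. u j)"

lemma pi_of_Suc:
  "pi_of (Suc m) u a = (if a < m then u a else 1 - (\<Sum>j<m. u j))"
  by (simp add: pi_of_def)

lemma sum_pi_of: "k \<ge> 1 \<Longrightarrow> (\<Sum>a<k. pi_of k u a) = 1"
  by (cases k) (auto simp: pi_of_Suc)

lemma pi_of_pos_iff: "k \<ge> 1 \<Longrightarrow> (\<forall>a<k. 0 < pi_of k u a) \<longleftrightarrow> simplex_coords k u"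
  by (cases k) (auto simp: pi_of_Suc simplex_coords_def less_Suc_eq)

lemma P_of_upper_pairs: "(a, b) \<in> upper_pairs k \<Longrightarrow> P_of q a b = q (a, b)"
  by (auto simp: P_of_def upper_pairs_def min_def max_def)

lemma indicator_Theta_param:
  assumes "k \<ge> 1"
  shows "indicator (Theta k) (pi_of k u, P_of q)
    = of_bool (simplex_coords k u) * (\<Prod>p\<in>upper_pairs k. indicator {0..1} (q p) :: real)"
proof -
  have pi: "(\<forall>a<k. 0 < pi_of k u a \<and> pi_of k u a \<le> 1) \<longleftrightarrow> simplex_coords k u"
  proof -
    have "pi_of k u a \<le> 1" if "\<forall>a<k. 0 < pi_of k u a" "a < k" for a
      using that sum_pi_of[OF assms, of u] member_le_sum[of a "{..<k}" "pi_of k u"]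
      by (auto intro: less_imp_le)
    then show ?thesis using pi_of_pos_iff[OF assms] by blast
  qed
  have P: "(\<forall>a<k. \<forall>b<k. 0 \<le> P_of q a b \<and> P_of q a b \<le> 1 \<and> P_of q a b = P_of q b a)
      \<longleftrightarrow> (\<forall>p\<in>upper_pairs k. 0 \<le> q p \<and> q p \<le> 1)"
  proof
    assume "\<forall>a<k. \<forall>b<k. 0 \<le> P_of q a b \<and> P_of q a b \<le> 1 \<and> P_of q a b = P_of q b a"
    then show "\<forall>p\<in>upper_pairs k. 0 \<le> q p \<and> q p \<le> 1"
      by (auto simp: upper_pairs_def P_of_upper_pairs[symmetric])
  next
    assume "\<forall>p\<in>upper_pairs k. 0 \<le> q p \<and> q p \<le> 1"
    moreover have "(min a b, max a b) \<in> upper_pairs k" if "a < k" "b < k" for a b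
      using that by (auto simp: upper_pairs_def)
    ultimately show "\<forall>a<k. \<forall>b<k. 0 \<le> P_of q a b \<and> P_of q a b \<le> 1 \<and> P_of q a b = P_of q b a"
      by (auto simp: P_of_def min.commute max.commute)
  qed
  have "(\<Prod>p\<in>upper_pairs k. indicator {0..1} (q p) :: real)
      = of_bool (\<forall>p\<in>upper_pairs k. 0 \<le> q p \<and> q p \<le> 1)"
    using finite_upper_pairs[of k] by (auto simp: indicator_def prod_zero_iff)
  then show ?thesis
    unfolding Theta_def using pi P sum_pi_of[OF assms] by (simp add: indicator_def)
qed

definition beta_half_density :: "nat \<Rightarrow> nat \<Rightarrow> real \<Rightarrow> real" where
  "beta_half_density e f t =
     indicator {0<..<1} t * t powr (real e + 1/2 - 1) * (1 - t) powr (real f + 1/2 - 1) / pi"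

lemma beta_half_density_nonneg: "beta_half_density e f t \<ge> 0"
  by (simp add: beta_half_density_def)

lemma indicator_likelihood_prior_eq_beta_half_density:
  "indicator {0..1} t * (rpow0 t (real e) * rpow0 (1 - t) (real f)) *
     (1 / Gamma (1/2) ^ 2 * t powr (-1/2) * (1 - t) powr (-1/2)) = beta_half_density e f t"
proof (cases "0 < t \<and> t < 1")
  case True
  have "rpow0 t (real e) * t powr (-1/2) = t powr (real e + 1/2 - 1)"
    "rpow0 (1 - t) (real f) * (1 - t) powr (-1/2) = (1 - t) powr (real f + 1/2 - 1)"
    using True by (simp_all add: rpow0_def powr_add[symmetric])
  then show ?thesis
    using True by (simp add: beta_half_density_def indicator_def Gamma_one_half_real mult_ac)
next
  case False
  then show ?thesis
    by (auto simp: beta_half_density_def indicator_def rpow0_def)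
qed

lemma prod_pi_of_eq_dirichlet_kernel:
  assumes "k \<ge> 1"
  shows "of_bool (simplex_coords k u) * (\<Prod>a<k. pi_of k u a ^ c a * pi_of k u a powr (-1/2))
       = dirichlet_kernel (k - 1) (\<lambda>j. real (c j) + 1/2) (real (c (k - 1)) + 1/2) 1 u"
proof -
  obtain m where m: "k = Suc m" using assms by (cases k) auto
  have factor: "y ^ N * y powr (- (1/2)) = y powr (real N - 1/2)" if "y > 0" for y :: real and N
    using that by (simp add: powr_realpow[symmetric] powr_add[symmetric])
  show ?thesis
  proof (cases "simplex_coords k u")
    case True
    then have pos: "u j > 0" if "j < m" for j
      using that by (simp add: simplex_coords_def m)
    have pos_last: "1 - (\<Sum>j<m. u j) > 0" using True by (simp add: simplex_coords_def m)
    have "(\<Prod>a<k. pi_of k u a ^ c a * pi_of k u a powr (-1/2))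
        = (\<Prod>j<m. indicator {0<..} (u j) * u j powr (real (c j) + 1/2 - 1)) *
          (indicator {0<..} (1 - (\<Sum>j<m. u j)) * (1 - (\<Sum>j<m. u j)) powr (real (c m) + 1/2 - 1))"
      unfolding m prod.lessThan_Suc
      by (rule arg_cong2[where f = times], rule prod.cong)
        (use pos pos_last in \<open>auto simp: pi_of_Suc factor\<close>)
    then show ?thesis using True by (simp add: m dirichlet_kernel_def)
  next
    case False
    then have "(\<exists>j<m. \<not> u j > 0) \<or> \<not> 1 - (\<Sum>j<m. u j) > 0"
      by (auto simp: simplex_coords_def m)
    then have "dirichlet_kernel m (\<lambda>j. real (c j) + 1/2) (real (c m) + 1/2) 1 u = 0"
      by (auto simp: dirichlet_kernel_def indicator_def prod_zero_iff)
    then show ?thesis using False m by simp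
  qed
qed

definition label_density :: "nat \<Rightarrow> nat \<Rightarrow> (nat \<Rightarrow> nat) \<Rightarrow> (nat \<Rightarrow> real) \<Rightarrow> real" where
  "label_density k n z u = Gamma (real k / 2) / Gamma (1/2) ^ k *
     dirichlet_kernel (k - 1) (\<lambda>j. real (cnt n z j) + 1/2) (real (cnt n z (k - 1)) + 1/2) 1 u"

definition edge_density ::
    "nat \<Rightarrow> nat \<Rightarrow> (nat \<Rightarrow> nat) \<Rightarrow> (nat \<Rightarrow> nat \<Rightarrow> bool) \<Rightarrow> (nat \<times> nat \<Rightarrow> real) \<Rightarrow> real" where
  "edge_density k n z x q = (\<Prod>(a, b)\<in>upper_pairs k.
     beta_half_density (block_edges n z x a b) (block_nonedges n z x a b) (q (a, b)))"

lemma prob_zx_P_of: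
  assumes "adjacency n x"
  shows "prob_zx k n \<pi> (P_of q) z x = (\<Prod>a<k. \<pi> a ^ cnt n z a) *
    (\<Prod>(a, b)\<in>upper_pairs k. rpow0 (q (a, b)) (real (block_edges n z x a b)) *
       rpow0 (1 - q (a, b)) (real (block_nonedges n z x a b)))"
proof -
  have "prob_zx k n \<pi> (P_of q) z x = (\<Prod>a<k. \<pi> a ^ cnt n z a) *
      (\<Prod>(a, b)\<in>upper_pairs k. rpow0 (P_of q a b) (real (block_edges n z x a b)) *
         rpow0 (1 - P_of q a b) (real (block_nonedges n z x a b)))"
    by (rule prob_zx_eq_block_product[OF assms]) (simp add: P_of_def min.commute max.commute)
  then show ?thesis by (auto simp: P_of_upper_pairs intro!: prod.cong)
qed

lemma KT_prior_P_of:
  "KT_prior k \<pi> (P_of q) = Gamma (real k / 2) / Gamma (1/2) ^ k * (\<Prod>a<k. \<pi> a powr (-1/2)) *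
    (\<Prod>(a, b)\<in>upper_pairs k. 1 / Gamma (1/2) ^ 2 * q (a, b) powr (-1/2) * (1 - q (a, b)) powr (-1/2))"
  unfolding KT_prior_def upper_pairs_def[symmetric]
  by (auto simp: P_of_upper_pairs mult.assoc intro!: prod.cong arg_cong2[where f = times])

lemma KT_integrand_eq:
  assumes k: "k \<ge> 1" and adj: "adjacency n x"
  shows "indicator (Theta k) (pi_of k u, P_of q) * prob_zx k n (pi_of k u) (P_of q) z x *
      KT_prior k (pi_of k u) (P_of q) = label_density k n z u * edge_density k n z x q"
proof -
  define \<pi> where "\<pi> = pi_of k u"
  define c where "c = Gamma (real k / 2) / Gamma (1/2) ^ k"
  define lik where "lik a b = rpow0 (q (a, b)) (real (block_edges n z x a b)) *
    rpow0 (1 - q (a, b)) (real (block_nonedges n z x a b))" for a b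
  define prior where "prior a b = 1 / Gamma (1/2) ^ 2 * q (a, b) powr (-1/2)
      * (1 - q (a, b)) powr (-1/2)"
    for a b
  have "indicator (Theta k) (\<pi>, P_of q) * prob_zx k n \<pi> (P_of q) z x * KT_prior k \<pi> (P_of q)
      = c * (of_bool (simplex_coords k u) * (\<Prod>a<k. \<pi> a ^ cnt n z a * \<pi> a powr (-1/2))) *
        (\<Prod>(a, b)\<in>upper_pairs k. indicator {0..1} (q (a, b)) * lik a b * prior a b)"
    unfolding \<pi>_def indicator_Theta_param[OF k] prob_zx_P_of[OF adj] KT_prior_P_of
      c_def[symmetric] lik_def[symmetric] prior_def[symmetric]
    by (simp add: prod.distrib case_prod_unfold mult_ac)
  also have "\<dots> = label_density k n z u * edge_density k n z x q"
  proof -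
    have "indicator {0..1} (q (a, b)) * lik a b * prior a b
        = beta_half_density (block_edges n z x a b) (block_nonedges n z x a b) (q (a, b))" for a b
      unfolding lik_def prior_def by (rule indicator_likelihood_prior_eq_beta_half_density)
    then show ?thesis
      unfolding \<pi>_def prod_pi_of_eq_dirichlet_kernel[OF k] label_density_def edge_density_def c_def
      by (simp only: mult.assoc)
  qed
  finally show ?thesis by (simp add: \<pi>_def)
qed

lemma label_density_nonneg: "k \<ge> 1 \<Longrightarrow> label_density k n z u \<ge> 0"
  unfolding label_density_def
  by (intro mult_nonneg_nonneg divide_nonneg_nonneg dirichlet_kernel_nonneg) (auto simp: less_imp_le)

lemma edge_density_nonneg: "edge_density k n z x q \<ge> 0"
  unfolding edge_density_def by (intro prod_nonneg) (auto simp: beta_half_density_nonneg)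

lemma label_density_measurable [measurable]:
  "label_density k n z \<in> borel_measurable (PiM {..<k - 1} (\<lambda>_. lborel))"
  unfolding label_density_def by measurable

lemma edge_density_measurable [measurable]:
  "edge_density k n z x \<in> borel_measurable (PiM (upper_pairs k) (\<lambda>_. lborel))"
  unfolding edge_density_def beta_half_density_def case_prod_unfold by measurable

lemma nn_integral_label_density:
  assumes "k \<ge> 1" and "z \<in> {..<n} \<rightarrow>\<^sub>E {..<k}"
  shows "(\<integral>\<^sup>+ u. ennreal (label_density k n z u) \<partial>PiM {..<k - 1} (\<lambda>_. lborel)) =
      ennreal (KT_counts k (cnt n z))"
proof -
  obtain m where m: "k = Suc m" using assms(1) by (cases k) auto
  define c where "c = Gamma (real k / 2) / Gamma (1/2) ^ k"
  define \<alpha> where "\<alpha> j = real (cnt n z j) + 1/2" for j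
  have c: "c \<ge> 0" using assms(1) by (simp add: c_def less_imp_le)
  have \<alpha>_pos: "\<alpha> j > 0" for j by (simp add: \<alpha>_def add_nonneg_pos)
  have "real (\<Sum>j<m. cnt n z j) + real (cnt n z m) = real n"
    using sum_cnt[OF assms(2)] unfolding m by (metis of_nat_add sum.lessThan_Suc)
  moreover have "(\<Sum>j<m. \<alpha> j) = real (\<Sum>j<m. cnt n z j) + real m / 2"
    by (simp add: \<alpha>_def sum.distrib)
  ultimately have sum_\<alpha>: "(\<Sum>j<m. \<alpha> j) + \<alpha> m = real n + real k / 2"
    by (simp add: \<alpha>_def m field_simps)
  have "label_density k n z u = c * dirichlet_kernel m \<alpha> (\<alpha> m) 1 u" for u
    unfolding label_density_def c_def \<alpha>_def m by simp
  then have "(\<integral>\<^sup>+ u. ennreal (label_density k n z u) \<partial>PiM {..<k - 1} (\<lambda>_. lborel))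
      = (\<integral>\<^sup>+ u. ennreal c * ennreal (dirichlet_kernel m \<alpha> (\<alpha> m) 1 u) \<partial>PiM {..<m} (\<lambda>_. lborel))"
    using c by (simp add: m ennreal_mult dirichlet_kernel_nonneg)
  also have "\<dots> = ennreal c * (\<integral>\<^sup>+ u. ennreal (dirichlet_kernel m \<alpha> (\<alpha> m) 1 u)
      \<partial>PiM {..<m} (\<lambda>_. lborel))"
    by (rule nn_integral_cmult) simp
  also have "\<dots> = ennreal c * ennreal ((\<Prod>j<m. Gamma (\<alpha> j))
      * Gamma (\<alpha> m) / Gamma (real n + real k / 2))"
    using \<alpha>_pos by (subst nn_integral_dirichlet_kernel) (simp_all add: sum_\<alpha>)
  also have "\<dots> = ennreal (KT_counts k (cnt n z))"
    using c sum_cnt[OF assms(2)]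
    by (simp add: KT_counts_def c_def \<alpha>_def m ennreal_mult[symmetric] less_imp_le add_nonneg_pos
        prod_nonneg mult.assoc)
  finally show ?thesis .
qed

lemma nn_integral_beta_half_density:
  "(\<integral>\<^sup>+ t. ennreal (beta_half_density e f t) \<partial>lborel) =
      ennreal (Beta (real e + 1/2) (real f + 1/2) / pi)"
proof -
  have "(\<integral>\<^sup>+ t. ennreal (beta_half_density e f t) \<partial>lborel)
      = ennreal (1 / pi) * (\<integral>\<^sup>+ t. ennreal (indicator {0<..<1} t * t powr (real e + 1/2 - 1) *
          (1 - t) powr (real f + 1/2 - 1)) \<partial>lborel)"
    by (subst nn_integral_cmult[symmetric])
      (auto simp: beta_half_density_def ennreal_mult[symmetric] indicator_def
          intro!: nn_integral_cong)
  also have "\<dots> = ennreal (Beta (real e + 1/2) (real f + 1/2) / pi)"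
    by (subst nn_integral_Beta) (auto simp: ennreal_mult[symmetric]
        Beta_nat_plus_half_nonneg add_nonneg_pos)
  finally show ?thesis .
qed

lemma nn_integral_edge_density:
  "(\<integral>\<^sup>+ q. ennreal (edge_density k n z x q) \<partial>PiM (upper_pairs k) (\<lambda>_. lborel))
    = ennreal (\<Prod>(a, b)\<in>upper_pairs k.
        Beta (real (block_edges n z x a b) + 1/2) (real (block_nonedges n z x a b) + 1/2) / pi)"
proof -
  interpret product_sigma_finite "\<lambda>_. lborel :: real measure" by (rule product_sigma_finite_lborel)
  have "(\<integral>\<^sup>+ q. ennreal (edge_density k n z x q) \<partial>PiM (upper_pairs k) (\<lambda>_. lborel))
      = (\<integral>\<^sup>+ q. (\<Prod>p\<in>upper_pairs k. ennreal (beta_half_density (block_edges n z x (fst p) (snd p))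
          (block_nonedges n z x (fst p) (snd p)) (q p))) \<partial>PiM (upper_pairs k) (\<lambda>_. lborel))"
    unfolding edge_density_def case_prod_unfold
    by (intro nn_integral_cong) (simp add: prod_ennreal beta_half_density_nonneg)
  also have "\<dots> = (\<Prod>p\<in>upper_pairs k. \<integral>\<^sup>+ t.
      ennreal (beta_half_density (block_edges n z x (fst p) (snd p))
          (block_nonedges n z x (fst p) (snd p)) t) \<partial>lborel)"
    by (rule product_nn_integral_prod[OF finite_upper_pairs]) (simp add: beta_half_density_def)
  also have "\<dots> = ennreal (\<Prod>(a, b)\<in>upper_pairs k.
        Beta (real (block_edges n z x a b) + 1/2) (real (block_nonedges n z x a b) + 1/2) / pi)"
    by (simp add: nn_integral_beta_half_density case_prod_unfold prod_ennreal
        Beta_nat_plus_half_nonneg)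
  finally show ?thesis .
qed

definition KT_joint :: "nat \<Rightarrow> nat \<Rightarrow> (nat \<Rightarrow> nat) \<Rightarrow> (nat \<Rightarrow> nat \<Rightarrow> bool) \<Rightarrow> real" where
  "KT_joint k n z x = KT_counts k (cnt n z) * (\<Prod>(a, b)\<in>upper_pairs k.
     Beta (real (block_edges n z x a b) + 1/2) (real (block_nonedges n z x a b) + 1/2) / pi)"

lemma KT_joint_nonneg: "k \<ge> 1 \<Longrightarrow> KT_joint k n z x \<ge> 0"
  unfolding KT_joint_def
  by (intro mult_nonneg_nonneg KT_counts_nonneg prod_nonneg) (auto simp: Beta_nat_plus_half_nonneg)

lemma label_edge_density_measurable [measurable]:
  "(\<lambda>w. ennreal (label_density k n z (fst w) * edge_density k n z x (snd w)))
    \<in> borel_measurable (PiM {..<k - 1} (\<lambda>_. lborel) \<Otimes>\<^sub>M PiM (upper_pairs k) (\<lambda>_. lborel))"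
  by measurable

lemma nn_integral_label_edge_density:
  assumes "k \<ge> 1" and "z \<in> {..<n} \<rightarrow>\<^sub>E {..<k}"
  shows "(\<integral>\<^sup>+ w. ennreal (label_density k n z (fst w) * edge_density k n z x (snd w))
      \<partial>(PiM {..<k - 1} (\<lambda>_. lborel) \<Otimes>\<^sub>M PiM (upper_pairs k) (\<lambda>_. lborel))) =
          ennreal (KT_joint k n z x)"
proof -
  interpret product_sigma_finite "\<lambda>_. lborel :: real measure" by (rule product_sigma_finite_lborel)
  have sf: "sigma_finite_measure (PiM (upper_pairs k) (\<lambda>_. lborel :: real measure))"
    by (rule sigma_finite[OF finite_upper_pairs])
  have "(\<integral>\<^sup>+ w. ennreal (label_density k n z (fst w) * edge_density k n z x (snd w))
      \<partial>(PiM {..<k - 1} (\<lambda>_. lborel) \<Otimes>\<^sub>M PiM (upper_pairs k) (\<lambda>_. lborel)))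
    = (\<integral>\<^sup>+ u. \<integral>\<^sup>+ q. ennreal (label_density k n z u * edge_density k n z x q)
        \<partial>PiM (upper_pairs k) (\<lambda>_. lborel) \<partial>PiM {..<k - 1} (\<lambda>_. lborel))"
    using sigma_finite_measure.nn_integral_fst[OF sf label_edge_density_measurable] by simp
  also have "\<dots> = (\<integral>\<^sup>+ u. ennreal (label_density k n z u) *
      (\<integral>\<^sup>+ q. ennreal (edge_density k n z x q) \<partial>PiM (upper_pairs k) (\<lambda>_. lborel))
          \<partial>PiM {..<k - 1} (\<lambda>_. lborel))"
    using assms(1)
    by (intro nn_integral_cong)
      (simp add: ennreal_mult label_density_nonneg edge_density_nonneg nn_integral_cmult)
  also have "\<dots> = (\<integral>\<^sup>+ u. ennreal (label_density k n z u) \<partial>PiM {..<k - 1} (\<lambda>_. lborel)) *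
      (\<integral>\<^sup>+ q. ennreal (edge_density k n z x q) \<partial>PiM (upper_pairs k) (\<lambda>_. lborel))"
    by (rule nn_integral_multc) measurable
  also have "\<dots> = ennreal (KT_joint k n z x)"
    unfolding nn_integral_label_density[OF assms] nn_integral_edge_density KT_joint_def
    using assms(1)
    by (simp add: ennreal_mult KT_counts_nonneg prod_nonneg
        Beta_nat_plus_half_nonneg case_prod_unfold)
  finally show ?thesis .
qed

lemma KT_eq_sum_KT_joint:
  assumes "k \<ge> 1" and "adjacency n x"
  shows "KT k n x = (\<Sum>z\<in>{..<n} \<rightarrow>\<^sub>E {..<k}. KT_joint k n z x)"
proof -
  define Z where "Z = {..<n} \<rightarrow>\<^sub>E {..<k}"
  have "finite Z" unfolding Z_def by (intro finite_PiE) auto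
  have integrand: "indicator (Theta k) (pi_of k (fst w), P_of (snd w)) *
      prob_x k n (pi_of k (fst w)) (P_of (snd w)) x * KT_prior k (pi_of k (fst w)) (P_of (snd w))
    = (\<Sum>z\<in>Z. label_density k n z (fst w) * edge_density k n z x (snd w))" for w
    unfolding prob_x_def Z_def[symmetric] sum_distrib_left sum_distrib_right
    by (intro sum.cong refl KT_integrand_eq assms)
  have "(\<integral>\<^sup>+ w. ennreal (indicator (Theta k) (pi_of k (fst w), P_of (snd w)) *
      prob_x k n (pi_of k (fst w)) (P_of (snd w)) x * KT_prior k (pi_of k (fst w)) (P_of (snd w)))
      \<partial>(PiM {..<k - 1} (\<lambda>_. lborel) \<Otimes>\<^sub>M PiM {(a, b). a \<le> b \<and> b < k} (\<lambda>_. lborel)))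
    = (\<Sum>z\<in>Z. \<integral>\<^sup>+ w. ennreal (label_density k n z (fst w) * edge_density k n z x (snd w))
      \<partial>(PiM {..<k - 1} (\<lambda>_. lborel) \<Otimes>\<^sub>M PiM (upper_pairs k) (\<lambda>_. lborel)))"
    unfolding integrand upper_pairs_def[symmetric] using assms(1)
    by (subst nn_integral_sum[symmetric])
      (auto simp: label_density_nonneg edge_density_nonneg simp del: One_nat_def
          intro!: nn_integral_cong)
  also have "\<dots> = (\<Sum>z\<in>Z. ennreal (KT_joint k n z x))"
    by (intro sum.cong refl nn_integral_label_edge_density assms(1)) (simp add: Z_def)
  also have "\<dots> = ennreal (\<Sum>z\<in>Z. KT_joint k n z x)"
    using assms(1) by (simp add: KT_joint_nonneg)
  finally show ?thesis
    unfolding KT_def Z_def using assms(1) by (simp add: sum_nonneg KT_joint_nonneg)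
qed

section \<open>The regret bound\<close>

lemma ln_sqrt_pi_ge: "1/2 \<le> ln (sqrt pi)"
proof -
  have "exp 1 \<le> pi" using e_less_272 pi_gt3 by simp
  then have "1 \<le> ln pi" using ln_exp[of 1] ln_le_cancel_iff[of "exp 1" pi] by simp
  then show ?thesis by (simp add: ln_sqrt)
qed

lemma regret_constant_le:
  assumes "k \<ge> 1" and "n \<ge> 1" and "2 * q = k * (k + 1)"
  shows "multinomial_regret_bound k n * (exp 1 * real n) ^ q
         \<le> exp ((real (k * (k + 2)) / 2 - 1/2) * ln (real n) + c_const k n)"
proof -
  have n: "real n > 0" using assms(2) by simp
  have Gk: "Gamma (real k / 2) > 0" using assms(1) by simp
  have "1 * 2 \<le> k * (k + 1)" using assms(1) by (intro mult_le_mono) auto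
  then have q: "real q = real k * (real k + 1) / 2" "real q \<ge> 1"
    using arg_cong[OF assms(3), of real] assms(3) by (auto simp: algebra_simps)
  have "multinomial_regret_bound k n * (exp 1 * real n) ^ q
      = exp (1 + (real k - 1) * (real k - 2) / (4 * real n) + (real k - 1) / 2 * ln (real n)
          - ln (Gamma (real k / 2)) + real q * (1 + ln (real n)))"
  proof -
    have "(exp 1 * real n) ^ q = exp (real q * (1 + ln (real n)))"
      using n by (simp add: exp_of_nat_mult exp_add)
    then show ?thesis
      using n Gk by (simp add: multinomial_regret_bound_def exp_add exp_diff powr_def mult_ac)
  qed
  also have "\<dots> \<le> exp ((real (k * (k + 2)) / 2 - 1/2) * ln (real n) + c_const k n)"
  proof -
    have "(real k - 1) * (real k - 2) \<le> real (k * (k - 1))"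
      using assms(1) by (simp add: of_nat_diff algebra_simps)
    then have "(real k - 1) * (real k - 2) / (4 * real n) \<le> real (k * (k - 1)) / (4 * real n)"
      using n by (intro divide_right_mono) auto
    moreover have "real q * (1/2) \<le> real q * ln (sqrt pi)"
      using ln_sqrt_pi_ge q(2) by (intro mult_left_mono) auto
    moreover have "0 \<le> 1 / (12 * real n)" using n by simp
    moreover have "(real (k * (k + 2)) / 2 - 1/2) * ln (real n)
        = (real k - 1) / 2 * ln (real n) + real q * ln (real n)"
      by (simp add: q(1) field_simps)
    moreover have "c_const k n = real q * ln (sqrt pi) + real (k * (k - 1)) / (4 * real n)
        + 1 / (12 * real n) + (ln (sqrt pi) - ln (Gamma (real k / 2))) + 7 * real q / 6"
      using Gk by (simp add: c_const_def Gamma_one_half_real ln_div q(1) field_simps)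
    moreover have "real q * (1 + ln (real n)) = real q + real q * ln (real n)"
      by (simp add: algebra_simps)
    ultimately show ?thesis
      using ln_sqrt_pi_ge q(2) by (subst exp_le_cancel_iff) linarith
  qed
  finally show ?thesis .
qed

lemma prod_block_likelihood_le:
  assumes "n \<ge> 1" and "adjacency n x" and "\<And>a b. (a, b) \<in> upper_pairs k \<Longrightarrow> 0 \<le> P a b \<and> P a b \<le> 1"
  shows "(\<Prod>(a, b)\<in>upper_pairs k. P a b ^ block_edges n z x a b
      * (1 - P a b) ^ block_nonedges n z x a b)
    \<le> (exp 1 * real n) ^ card (upper_pairs k) * (\<Prod>(a, b)\<in>upper_pairs k.
        Beta (real (block_edges n z x a b) + 1/2) (real (block_nonedges n z x a b) + 1/2) / pi)"
proof -
  have "P a b ^ block_edges n z x a b * (1 - P a b) ^ block_nonedges n z x a b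
      \<le> exp 1 * real n *
        (Beta (real (block_edges n z x a b) + 1/2) (real (block_nonedges n z x a b) + 1/2) / pi)"
    if "(a, b) \<in> upper_pairs k" for a b
    using assms(3)[OF that]
    by (intro binomial_likelihood_le_Beta block_edges_add_nonedges_le[OF assms(2)] assms(1)) auto
  then have "(\<Prod>(a, b)\<in>upper_pairs k. P a b ^ block_edges n z x a b
      * (1 - P a b) ^ block_nonedges n z x a b)
    \<le> (\<Prod>(a, b)\<in>upper_pairs k. exp 1 * real n *
        (Beta (real (block_edges n z x a b) + 1/2) (real (block_nonedges n z x a b) + 1/2) / pi))"
    using assms(3) by (intro prod_mono) auto
  also have "\<dots> = (exp 1 * real n) ^ card (upper_pairs k) * (\<Prod>(a, b)\<in>upper_pairs k.
        Beta (real (block_edges n z x a b) + 1/2) (real (block_nonedges n z x a b) + 1/2) / pi)"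
    unfolding case_prod_unfold prod.distrib by (simp add: power_mult_distrib)
  finally show ?thesis .
qed

lemma prob_zx_le_KT_joint:
  assumes k: "k \<ge> 1" and n: "n \<ge> 1" and adj: "adjacency n x"
    and z: "z \<in> {..<n} \<rightarrow>\<^sub>E {..<k}" and \<theta>: "(\<pi>, P) \<in> Theta k"
  shows "prob_zx k n \<pi> P z x
    \<le> exp ((real (k * (k + 2)) / 2 - 1/2) * ln (real n) + c_const k n) * KT_joint k n z x"
proof -
  define B where "B = (\<Prod>(a, b)\<in>upper_pairs k.
    Beta (real (block_edges n z x a b) + 1/2) (real (block_nonedges n z x a b) + 1/2) / pi)"
  have \<pi>: "\<And>a. a < k \<Longrightarrow> 0 < \<pi> a" "(\<Sum>a<k. \<pi> a) = 1"
    and P: "\<And>a b. a < k \<Longrightarrow> b < k \<Longrightarrow> 0 \<le> P a b \<and> P a b \<le> 1 \<and> P a b = P b a"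
    using \<theta> unfolding Theta_def by auto
  have P_upper: "0 \<le> P a b \<and> P a b \<le> 1" if "(a, b) \<in> upper_pairs k" for a b
    using that P by (auto simp: upper_pairs_def)
  have "prob_zx k n \<pi> P z x = (\<Prod>a<k. \<pi> a ^ cnt n z a) *
      (\<Prod>(a, b)\<in>upper_pairs k. P a b ^ block_edges n z x a b * (1 - P a b) ^ block_nonedges n z x a b)"
    using P P_upper
    by (subst prob_zx_eq_block_product[OF adj]) (auto simp: rpow0_of_nat intro!: prod.cong)
  also have "\<dots> \<le> (multinomial_regret_bound k n * KT_counts k (cnt n z)) * ((exp 1
      * real n) ^ card (upper_pairs k) * B)"
  proof (rule mult_mono)
    show "(\<Prod>a<k. \<pi> a ^ cnt n z a) \<le> multinomial_regret_bound k n * KT_counts k (cnt n z)"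
      using \<pi> by (intro prod_power_le_KT_counts k sum_cnt[OF z] n) (auto intro: less_imp_le)
    show "0 \<le> multinomial_regret_bound k n * KT_counts k (cnt n z)"
      unfolding multinomial_regret_bound_def using k
          by (intro mult_nonneg_nonneg KT_counts_nonneg) auto
  qed (use P_upper in \<open>auto simp: B_def intro!: prod_block_likelihood_le n adj prod_nonneg\<close>)
  also have "\<dots> = (multinomial_regret_bound k n * (exp 1 * real n) ^ card (upper_pairs k))
      * KT_joint k n z x"
    unfolding KT_joint_def B_def by (simp only: mult_ac)
  also have "\<dots> \<le> exp ((real (k * (k + 2)) / 2 - 1/2) * ln (real n) + c_const k n) * KT_joint k n z x"
    using k n card_upper_pairs
    by (intro mult_right_mono regret_constant_le KT_joint_nonneg) auto
  finally show ?thesis .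
qed

lemma prob_x_pos:
  assumes "k \<ge> 1" and "\<And>a. a < k \<Longrightarrow> \<pi> a > 0" and "\<And>a b. a < k \<Longrightarrow> b < k \<Longrightarrow> 0 < P a b \<and> P a b < 1"
  shows "prob_x k n \<pi> P x > 0"
proof -
  have "prob_zx k n \<pi> P z x > 0" for z
    using assms(2,3) unfolding prob_zx_def
    by (intro mult_pos_pos prod_pos) (auto simp: rpow0_def dest: assms(3))
  moreover have "{..<n} \<rightarrow>\<^sub>E {..<k} \<noteq> {}"
    using assms(1) by (auto simp: PiE_eq_empty_iff lessThan_empty_iff)
  ultimately show ?thesis
    unfolding prob_x_def by (intro sum_pos finite_PiE) auto
qed

lemma MaxLik_pos_le:
  assumes "k \<ge> 1" and "\<And>\<pi> P. (\<pi>, P) \<in> Theta k \<Longrightarrow> prob_x k n \<pi> P x \<le> B"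
  shows "0 < MaxLik k n x" and "MaxLik k n x \<le> B"
proof -
  define S where "S = {prob_x k n \<pi> P x | \<pi> P. (\<pi>, P) \<in> Theta k}"
  define \<pi>\<^sub>0 where "\<pi>\<^sub>0 a = 1 / real k" for a :: nat
  define P\<^sub>0 where "P\<^sub>0 a b = (1 / 2 :: real)" for a b :: nat
  have "(\<pi>\<^sub>0, P\<^sub>0) \<in> Theta k" using assms(1) by (simp add: Theta_def \<pi>\<^sub>0_def P\<^sub>0_def)
  then have "prob_x k n \<pi>\<^sub>0 P\<^sub>0 x \<in> S" unfolding S_def by blast
  moreover have "prob_x k n \<pi>\<^sub>0 P\<^sub>0 x > 0"
    using assms(1) by (intro prob_x_pos) (auto simp: \<pi>\<^sub>0_def P\<^sub>0_def)
  moreover have "s \<le> B" if "s \<in> S" for s using that assms(2) by (auto simp: S_def)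
  ultimately show "0 < MaxLik k n x" "MaxLik k n x \<le> B"
    unfolding MaxLik_def S_def[symmetric]
    by (auto intro!: cSup_least less_le_trans[OF _ cSup_upper] bdd_aboveI)
qed

theorem proposition1:
  fixes k n :: nat and x :: "nat \<Rightarrow> nat \<Rightarrow> bool"
  assumes "k \<ge> 1" and "n \<ge> max 4 k" and "adjacency n x"
  shows "ln (MaxLik k n x / KT k n x)
           \<le> (real (k * (k + 2)) / 2 - 1/2) * ln (real n) + c_const k n"
proof -
  define R where "R = exp ((real (k * (k + 2)) / 2 - 1/2) * ln (real n) + c_const k n)"
  have n: "n \<ge> 1" using assms(2) by simp
  have "prob_x k n \<pi> P x \<le> R * KT k n x" if "(\<pi>, P) \<in> Theta k" for \<pi> P
    unfolding prob_x_def KT_eq_sum_KT_joint[OF assms(1,3)] sum_distrib_left R_def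
    using that by (intro sum_mono prob_zx_le_KT_joint[OF assms(1) n assms(3)])
  then have max_lik: "0 < MaxLik k n x" "MaxLik k n x \<le> R * KT k n x"
    using MaxLik_pos_le[OF assms(1)] by blast+
  moreover have R: "R > 0" by (simp add: R_def)
  ultimately have KT: "KT k n x > 0" by (meson less_le_trans zero_less_mult_pos)
  then have "MaxLik k n x / KT k n x \<le> R" using max_lik(2) by (simp add: pos_divide_le_eq)
  with max_lik(1) KT R have "ln (MaxLik k n x / KT k n x) \<le> ln R" by simp
  then show ?thesis by (simp add: R_def)
qed

end
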